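(* $s_{\mathbf A_R}=s_\Gamma$.
   Context: Let $\mathbf A_R=\{A_1,A_2,A_3\}$ with $A_1=\begin{pmatrix}1&1&1\\0&1&0\\0&0&1\end{pmatrix}$, $A_2=\begin{pmatrix}1&0&0\\1&1&1\\0&0&1\end{pmatrix}$, $A_3=\begin{pmatrix}1&0&0\\0&1&0\\1&1&1\end{pmatrix}$, and $\Gamma=\{A_i^nA_j: i\ne j\in\{1,2,3\},\ n\ge1\}$. For singular values $\alpha_1\ge\alpha_2\ge\alpha_3$ and $s\ge0$: $\phi^s(A)=(\alpha_2/\alpha_1)^s$ for $0\le s\le1$; $\frac{\alpha_2}{\alpha_1}(\frac{\alpha_3}{\alpha_1})^{s-1}$ for $1\le s\le2$; $(\frac{\alpha_2\alpha_3}{\alpha_1^2})^s$ for $s\ge2$. For a finite or countable set $\mathbf A$ of matrices, $\zeta_{\mathbf A}(s)=\sum_{n\ge1}\sum\phi^s(B_1\cdots B_n)$ over all words $(B_1,\dots,B_n)\in\mathbf A^n$, and $s_{\mathbf A}=\inf\{s\ge0:\zeta_{\mathbf A}(s)<\infty\}$. *)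

theory Defs
  imports "HOL-Analysis.Analysis"
begin

type_synonym mat3 = "real^3^3"

definition diag3 :: "real \<Rightarrow> real \<Rightarrow> real \<Rightarrow> mat3" where
  "diag3 a b c = (\<chi> i j. if i = j then (if i = 1 then a else if i = 2 then b else c) else 0)"

definition sing_vals :: "mat3 \<Rightarrow> real \<times> real \<times> real" where
  "sing_vals A = (SOME (a1, a2, a3). a1 \<ge> a2 \<and> a2 \<ge> a3 \<and> a3 \<ge> 0 \<and>
      (\<exists>U V. orthogonal_matrix U \<and> orthogonal_matrix V \<and> A = U ** diag3 a1 a2 a3 ** V))"

definition phi :: "real \<Rightarrow> mat3 \<Rightarrow> real" where
  "phi s A = (case sing_vals A of (a1, a2, a3) \<Rightarrow>
      if s \<le> 1 then (a2 / a1) powr s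
      else if s \<le> 2 then (a2 / a1) * (a3 / a1) powr (s - 1)
      else (a2 * a3 / a1\<^sup>2) powr s)"

definition word_prod :: "mat3 list \<Rightarrow> mat3" where
  "word_prod ws = foldr (**) ws (mat 1)"

definition zeta :: "mat3 set \<Rightarrow> real \<Rightarrow> ennreal" where
  "zeta \<A> s = (\<Sum>n. infsum (\<lambda>ws. ennreal (phi s (word_prod ws)))
                    {ws. length ws = Suc n \<and> set ws \<subseteq> \<A>})"

definition crit_exp :: "mat3 set \<Rightarrow> ereal" where
  "crit_exp \<A> = Inf {ereal s | s. s \<ge> 0 \<and> zeta \<A> s < \<infinity>}"

definition mpow :: "mat3 \<Rightarrow> nat \<Rightarrow> mat3" where
  "mpow A n = ((\<lambda>B. A ** B) ^^ n) (mat 1)"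

definition A1 :: mat3 where
  "A1 = vector [vector [1,1,1], vector [0,1,0], vector [0,0,1]]"
definition A2 :: mat3 where
  "A2 = vector [vector [1,0,0], vector [1,1,1], vector [0,0,1]]"
definition A3 :: mat3 where
  "A3 = vector [vector [1,0,0], vector [0,1,0], vector [1,1,1]]"

definition Amat :: "nat \<Rightarrow> mat3" where
  "Amat i = (if i = 1 then A1 else if i = 2 then A2 else A3)"

definition A_R :: "mat3 set" where
  "A_R = {A1, A2, A3}"

definition Gamma :: "mat3 set" where
  "Gamma = {mpow (Amat i) n ** Amat j | i j n.
              i \<in> {1,2,3} \<and> j \<in> {1,2,3} \<and> i \<noteq> j \<and> n \<ge> 1}"

end

(*
  Every element of Gamma is the product of a block A_i^n A_j (i ~= j, n >= 1).  Over the
  alphabet A_R these blocks form a prefix code, and distinct blocks have distinct products,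
  so words over Gamma correspond bijectively, with equal products, to the nonempty words
  over A_R that factor into blocks; hence zeta_Gamma <= zeta_{A_R}.  Every other nonempty
  word over A_R ends in a power A_i^m and factors into blocks once one letter A_j ~= A_i is
  appended.  Multiplying by A_j, a matrix of determinant 1 which, like its inverse, has
  norm at most 5, changes alpha_1 and alpha_3 by a factor at most 5, and hence the three
  ratios alpha_2/alpha_1, alpha_3/alpha_1, alpha_2 alpha_3/alpha_1^2 that determine phi^s by a
  factor at most 5^3.  So zeta_{A_R}(s) <= (1 + 125^s) zeta_Gamma(s), both zeta functions are
  finite for the same s, and the critical exponents agree.
*)
theory Submission
  imports Defs "HOL-Analysis.Cross3"
begin

section \<open>Factorisation of words into blocks\<close>

definition blocks :: "'a set \<Rightarrow> 'a list set" where
  "blocks S = {replicate n a @ [b] | a b n. a \<in> S \<and> b \<in> S \<and> a \<noteq> b \<and> 0 < n}"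

definition block_words :: "'a set \<Rightarrow> 'a list set" where
  "block_words S = concat ` (lists (blocks S) - {[]})"

lemma Nil_notin_blocks: "[] \<notin> blocks S"
  by (auto simp: blocks_def)

lemma set_subset_if_in_blocks: "u \<in> blocks S \<Longrightarrow> set u \<subseteq> S"
  by (auto simp: blocks_def)

lemma replicate_append_Cons_eqD:
  assumes "a \<noteq> b" "a \<noteq> b'" "replicate n a @ b # r = replicate n' a @ b' # r'"
  shows "n = n' \<and> b = b' \<and> r = r'"
  using assms
proof (induction n arbitrary: n')
  case 0
  then show ?case by (cases n') auto
next
  case (Suc n)
  then show ?case by (cases n') auto
qed

lemma blocks_append_eqD:
  assumes "u \<in> blocks S" "v \<in> blocks S" "u @ r = v @ r'"
  shows "u = v \<and> r = r'"
proof -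
  obtain a b n where u: "u = replicate n a @ [b]" "a \<noteq> b" "0 < n"
    using assms(1) by (auto simp: blocks_def)
  obtain a' b' n' where v: "v = replicate n' a' @ [b']" "a' \<noteq> b'" "0 < n'"
    using assms(2) by (auto simp: blocks_def)
  have "hd (u @ r) = a" "hd (v @ r') = a'" using u v by (simp_all add: hd_append)
  then have "a = a'" using assms(3) by simp
  then have "n = n' \<and> b = b' \<and> r = r'"
    using replicate_append_Cons_eqD[of a b b' n r n' r'] u v assms(3) by simp
  then show ?thesis using u v \<open>a = a'\<close> by simp
qed

lemma concat_blocks_eqD:
  assumes "bs \<in> lists (blocks S)" "bs' \<in> lists (blocks S)" "concat bs = concat bs'"
  shows "bs = bs'"
  using assms
proof (induction bs arbitrary: bs')
  case Nil
  then show ?case using Nil_notin_blocks by (cases bs') auto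
next
  case (Cons u bs)
  then obtain v bs'' where bs': "bs' = v # bs''"
    using Nil_notin_blocks by (cases bs') auto
  have "v \<in> blocks S" "bs'' \<in> lists (blocks S)" using Cons.prems(1) bs' by auto
  moreover have "u @ concat bs = v @ concat bs''" using Cons.prems(2) bs' by simp
  ultimately have "u = v" "concat bs = concat bs''"
    using blocks_append_eqD[OF \<open>u \<in> blocks S\<close>] by blast+
  then show ?case using Cons.IH \<open>bs'' \<in> lists (blocks S)\<close> bs' by blast
qed

lemma block_words_subset: "block_words S \<subseteq> lists S - {[]}"
proof
  fix w assume "w \<in> block_words S"
  then obtain bs where "bs \<in> lists (blocks S)" "bs \<noteq> []" "w = concat bs"
    unfolding block_words_def by blast
  then obtain u bs' where "u \<in> blocks S" "bs' \<in> lists (blocks S)" "w = concat (u # bs')"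
    by (cases bs) auto
  then show "w \<in> lists S - {[]}"
    using Nil_notin_blocks set_subset_if_in_blocks by fastforce
qed

lemma inj_on_concat_blocks: "inj_on concat (lists (blocks S))"
  by (rule inj_onI) (rule concat_blocks_eqD)

lemma word_eq_concat_blocks_append_replicate:
  assumes "w \<in> lists S" "w \<noteq> []"
  shows "\<exists>bs a m. bs \<in> lists (blocks S) \<and> a \<in> S \<and> w = concat bs @ replicate m a"
  using assms
proof (induction w rule: rev_induct)
  case Nil
  then show ?case by simp
next
  case (snoc x w)
  show ?case
  proof (cases "w = []")
    case True
    then show ?thesis using snoc.prems by (intro exI[of _ "[]"] exI[of _ x] exI[of _ 1]) auto
  next
    case False
    have x: "x \<in> S" and "w \<in> lists S" using snoc.prems(1) by auto
    with False obtain bs a m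
      where bs: "bs \<in> lists (blocks S)" "a \<in> S" "w = concat bs @ replicate m a"
      using snoc.IH by blast
    consider "m = 0" | "x = a" | "0 < m" "x \<noteq> a" by blast
    then show ?thesis
    proof cases
      case 1
      then show ?thesis using bs x by (intro exI[of _ bs] exI[of _ x] exI[of _ 1]) auto
    next
      case 2
      then show ?thesis using bs by (intro exI[of _ bs] exI[of _ a] exI[of _ "Suc m"])
        (simp add: replicate_append_same)
    next
      case 3
      then have "replicate m a @ [x] \<in> blocks S" using bs x by (auto simp: blocks_def)
      then show ?thesis using bs x
        by (intro exI[of _ "bs @ [replicate m a @ [x]]"] exI[of _ x] exI[of _ 0]) auto
    qed
  qed
qed

lemma append_letter_in_block_words:
  assumes w: "w \<in> lists S - {[]}" "w \<notin> block_words S"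
    and b: "b \<in> S" "b \<noteq> last w"
  shows "w @ [b] \<in> block_words S"
proof -
  have "w \<in> lists S" "w \<noteq> []" using w(1) by auto
  then obtain bs a m where bs: "bs \<in> lists (blocks S)" "a \<in> S" "w = concat bs @ replicate m a"
    using word_eq_concat_blocks_append_replicate by metis
  have "m \<noteq> 0"
  proof
    assume "m = 0"
    then have "bs \<noteq> []" "w = concat bs" using bs w(1) by auto
    then have "w \<in> block_words S" unfolding block_words_def using bs(1) by (intro image_eqI) auto
    then show False using w(2) by contradiction
  qed
  then have "last w = a" using bs(3) by simp
  then have "replicate m a @ [b] \<in> blocks S"
    unfolding blocks_def using \<open>m \<noteq> 0\<close> bs(2) b by blast
  then have "bs @ [replicate m a @ [b]] \<in> lists (blocks S) - {[]}" using bs(1) by simp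
  moreover have "w @ [b] = concat (bs @ [replicate m a @ [b]])" using bs(3) by simp
  ultimately show ?thesis unfolding block_words_def by (rule rev_image_eqI)
qed

section \<open>Countable sums of nonnegative extended reals\<close>

lemma infsum_cmult_right_ennreal:
  fixes f :: "'a \<Rightarrow> ennreal"
  shows "infsum (\<lambda>x. c * f x) A = c * infsum f A"
  by (simp add: nonneg_infsum_complete sum_distrib_left SUP_mult_left_ennreal)

lemma infsum_mono_set_ennreal:
  fixes f :: "'a \<Rightarrow> ennreal"
  shows "A \<subseteq> B \<Longrightarrow> infsum f A \<le> infsum f B"
  by (rule infsum_mono_neutral) (auto intro: nonneg_summable_on_complete)

lemma finite_subset_UN_lessThan:
  fixes B :: "nat \<Rightarrow> 'a set"
  assumes "finite F" "F \<subseteq> (\<Union>n. B n)"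
  shows "\<exists>N. F \<subseteq> (\<Union>i<N. B i)"
  using assms
proof (induction F rule: finite_induct)
  case empty
  then show ?case by blast
next
  case (insert x F)
  then obtain N m where "F \<subseteq> (\<Union>i<N. B i)" "x \<in> B m" by auto
  then have "insert x F \<subseteq> (\<Union>i<max N (Suc m). B i)" by force
  then show ?case ..
qed

lemma infsum_UN_nat_ennreal:
  fixes f :: "'a \<Rightarrow> ennreal"
  assumes "disjoint_family B"
  shows "infsum f (\<Union>n. B n) = (\<Sum>n. infsum f (B n))"
proof -
  have partial_sums: "(\<Sum>i<n. infsum f (B i)) = infsum f (\<Union>i<n. B i)" for n
    using assms
    by (intro sum_infsum) (auto simp: disjoint_family_on_def intro: nonneg_summable_on_complete)
  have "sum f F \<le> (SUP n. infsum f (\<Union>i<n. B i))" if F: "finite F" "F \<subseteq> (\<Union>n. B n)" for F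
  proof -
    obtain N where "F \<subseteq> (\<Union>i<N. B i)" using finite_subset_UN_lessThan[OF F] by blast
    then have "sum f F \<le> infsum f (\<Union>i<N. B i)"
      using infsum_mono_set_ennreal[of F] \<open>finite F\<close> by simp
    also have "\<dots> \<le> (SUP n. infsum f (\<Union>i<n. B i))" by (rule SUP_upper) simp
    finally show ?thesis .
  qed
  then have "infsum f (\<Union>n. B n) \<le> (SUP n. infsum f (\<Union>i<n. B i))"
    by (subst nonneg_infsum_complete) (auto intro: SUP_least)
  moreover have "(SUP n. infsum f (\<Union>i<n. B i)) \<le> infsum f (\<Union>n. B n)"
    by (intro SUP_least infsum_mono_set_ennreal) auto
  ultimately show ?thesis by (simp add: suminf_eq_SUP partial_sums)
qed


section \<open>Singular values\<close>

lemma eq_0_if_linear_le_quadratic: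
  fixes p c :: real
  assumes "\<And>t. 2 * t * p \<le> t\<^sup>2 * c"
  shows "p = 0"
proof (rule ccontr)
  assume "p \<noteq> 0"
  define k where "k = \<bar>c\<bar> + 1"
  have k: "k > 0" by (simp add: k_def add_nonneg_pos)
  have "2 * (p / k) * p \<le> (p / k)\<^sup>2 * c" by (rule assms)
  then have "2 * p\<^sup>2 * k \<le> p\<^sup>2 * c" using k by (simp add: field_simps power2_eq_square)
  then have "2 * k \<le> c" using \<open>p \<noteq> 0\<close> by (simp add: mult.commute mult.left_commute)
  then show False by (simp add: k_def)
qed

lemma orthogonal_images_if_norm_maximal:
  fixes f :: "'a::real_inner \<Rightarrow> 'b::real_inner"
  assumes f: "linear f" and v: "norm v = 1" and vw: "v \<bullet> w = 0"
    and max: "\<And>t. norm (f (v + t *\<^sub>R w)) \<le> norm (f v) * norm (v + t *\<^sub>R w)"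
  shows "f v \<bullet> f w = 0"
proof (rule eq_0_if_linear_le_quadratic)
  fix t
  have "(f v + t *\<^sub>R f w) \<bullet> (f v + t *\<^sub>R f w) = (norm (f (v + t *\<^sub>R w)))\<^sup>2"
    using f by (simp add: power2_norm_eq_inner linear_add linear_scale)
  also have "\<dots> \<le> (norm (f v) * norm (v + t *\<^sub>R w))\<^sup>2"
    using max by (simp add: power_mono)
  also have "\<dots> = (f v \<bullet> f v) * (1 + t\<^sup>2 * (w \<bullet> w))"
    using v vw unfolding power_mult_distrib power2_norm_eq_inner
    by (simp add: inner_add inner_commute norm_eq_1 power2_eq_square)
  finally show "2 * t * (f v \<bullet> f w) \<le> t\<^sup>2 * ((f v \<bullet> f v) * (w \<bullet> w) - f w \<bullet> f w)"
    by (simp add: inner_add inner_commute algebra_simps power2_eq_square)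
qed

lemma norm_image_le_if_le_on_unit_vectors:
  fixes f :: "'a::real_normed_vector \<Rightarrow> 'b::real_normed_vector"
  assumes f: "linear f" and C: "x \<in> C" "\<And>r x. x \<in> C \<Longrightarrow> r *\<^sub>R x \<in> C"
    and le: "\<And>x. x \<in> C \<Longrightarrow> norm x = 1 \<Longrightarrow> norm (f x) \<le> c"
  shows "norm (f x) \<le> c * norm x"
proof (cases "x = 0")
  case True
  then show ?thesis using f by (simp add: linear_0)
next
  case False
  have "norm (f (x /\<^sub>R norm x)) \<le> c"
    using False C by (intro le) auto
  then show ?thesis
    using False f by (simp add: linear_scale field_simps)
qed

lemma orthogonal_matrix_vector3:
  "orthogonal_matrix (vector [x, y, z] :: mat3) \<longleftrightarrow>
     norm x = 1 \<and> norm y = 1 \<and> norm z = 1 \<and> x \<bullet> y = 0 \<and> x \<bullet> z = 0 \<and> y \<bullet> z = 0"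
  unfolding orthogonal_matrix_orthonormal_rows
  by (simp add: row_def forall_3 orthogonal_def) (metis inner_commute)

lemma norm_maximizing_orthonormal_pair:
  fixes A :: mat3
  obtains v1 v2 where "norm v1 = 1" "norm v2 = 1" "v1 \<bullet> v2 = 0"
    "\<And>x. norm (A *v x) \<le> norm (A *v v1) * norm x"
    "\<And>x. v1 \<bullet> x = 0 \<Longrightarrow> norm (A *v x) \<le> norm (A *v v2) * norm x"
proof -
  have lin: "linear ((*v) A)" by (rule matrix_vector_mul_linear)
  have cont: "continuous_on S (\<lambda>x. norm (A *v x))" for S
    by (intro continuous_intros)
  have "sphere (0::real^3) 1 \<noteq> {}" by simp
  then obtain v1 where v1: "v1 \<in> sphere 0 1"
    and v1_max: "\<And>x. x \<in> sphere 0 1 \<Longrightarrow> norm (A *v x) \<le> norm (A *v v1)"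
    using continuous_attains_sup[OF compact_sphere _ cont] by blast
  define S where "S = sphere (0::real^3) 1 \<inter> {x. v1 \<bullet> x = 0}"
  obtain y :: "real^3" where y: "y \<noteq> 0" "orthogonal v1 y"
    using orthogonal_to_vector_exists[of v1] by auto
  have "y /\<^sub>R norm y \<in> S" using y by (simp add: S_def orthogonal_def)
  moreover have "compact S" unfolding S_def
    by (intro compact_Int_closed compact_sphere closed_hyperplane)
  ultimately obtain v2 where v2: "v2 \<in> S"
    and v2_max: "\<And>x. x \<in> S \<Longrightarrow> norm (A *v x) \<le> norm (A *v v2)"
    using continuous_attains_sup[OF _ _ cont, of S] by blast
  show thesis
  proof
    show "norm v1 = 1" using v1 by simp
    show "norm v2 = 1" "v1 \<bullet> v2 = 0" using v2 by (auto simp: S_def)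
    show "norm (A *v x) \<le> norm (A *v v1) * norm x" for x
      by (rule norm_image_le_if_le_on_unit_vectors[OF lin, where C = UNIV]) (use v1_max in auto)
    show "norm (A *v x) \<le> norm (A *v v2) * norm x" if "v1 \<bullet> x = 0" for x
      by (rule norm_image_le_if_le_on_unit_vectors[OF lin, where C = "{x. v1 \<bullet> x = 0}"])
        (use that v2_max in \<open>auto simp: S_def\<close>)
  qed
qed

lemma orthonormal_triple_with_orthogonal_images:
  fixes A :: mat3
  obtains v1 v2 v3 where "norm v1 = 1" "norm v2 = 1" "norm v3 = 1"
    "v1 \<bullet> v2 = 0" "v1 \<bullet> v3 = 0" "v2 \<bullet> v3 = 0"
    "(A *v v1) \<bullet> (A *v v2) = 0" "(A *v v1) \<bullet> (A *v v3) = 0" "(A *v v2) \<bullet> (A *v v3) = 0"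
    "norm (A *v v2) \<le> norm (A *v v1)" "norm (A *v v3) \<le> norm (A *v v2)"
proof -
  obtain v1 v2 where n1: "norm v1 = 1" and n2: "norm v2 = 1" and o12: "v1 \<bullet> v2 = 0"
    and le1: "\<And>x. norm (A *v x) \<le> norm (A *v v1) * norm x"
    and le2: "\<And>x. v1 \<bullet> x = 0 \<Longrightarrow> norm (A *v x) \<le> norm (A *v v2) * norm x"
    using norm_maximizing_orthonormal_pair[of A] by blast
  have lin: "linear ((*v) A)" by (rule matrix_vector_mul_linear)
  define v3 where "v3 = cross3 v1 v2"
  have o13: "v1 \<bullet> v3 = 0" and o23: "v2 \<bullet> v3 = 0" unfolding v3_def using dot_cross_self by auto
  have "(norm v3)\<^sup>2 = 1" unfolding v3_def using norm_cross[of v1 v2] n1 n2 o12 by simp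
  then have n3: "norm v3 = 1" by (smt (verit) norm_ge_zero power2_eq_1_iff)
  have "(A *v v1) \<bullet> (A *v v2) = 0" "(A *v v1) \<bullet> (A *v v3) = 0"
    using orthogonal_images_if_norm_maximal[OF lin n1] o12 o13 le1 by auto
  moreover have "(A *v v2) \<bullet> (A *v v3) = 0"
  proof (rule orthogonal_images_if_norm_maximal[OF lin n2 o23])
    fix t
    have "v1 \<bullet> (v2 + t *\<^sub>R v3) = 0" using o12 o13 by (simp add: inner_add_right)
    then show "norm (A *v (v2 + t *\<^sub>R v3)) \<le> norm (A *v v2) * norm (v2 + t *\<^sub>R v3)"
      by (rule le2)
  qed
  moreover have "norm (A *v v2) \<le> norm (A *v v1)" using le1[of v2] n2 by simp
  moreover have "norm (A *v v3) \<le> norm (A *v v2)" using le2[OF o13] n3 by simp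
  ultimately show thesis using that n1 n2 n3 o12 o13 o23 by blast
qed

lemma svd_exists:
  fixes A :: mat3
  assumes "det A \<noteq> 0"
  shows "\<exists>a1 a2 a3 U V. a1 \<ge> a2 \<and> a2 \<ge> a3 \<and> a3 \<ge> 0 \<and>
    orthogonal_matrix U \<and> orthogonal_matrix V \<and> A = U ** diag3 a1 a2 a3 ** V"
proof -
  obtain v1 v2 v3 where n: "norm v1 = 1" "norm v2 = 1" "norm v3 = 1"
    and o: "v1 \<bullet> v2 = 0" "v1 \<bullet> v3 = 0" "v2 \<bullet> v3 = 0"
    and Ao: "(A *v v1) \<bullet> (A *v v2) = 0" "(A *v v1) \<bullet> (A *v v3) = 0" "(A *v v2) \<bullet> (A *v v3) = 0"
    and le: "norm (A *v v2) \<le> norm (A *v v1)" "norm (A *v v3) \<le> norm (A *v v2)"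
    by (rule orthonormal_triple_with_orthogonal_images)
  define a1 a2 a3 where "a1 = norm (A *v v1)" and "a2 = norm (A *v v2)" and "a3 = norm (A *v v3)"
  have "inj ((*v) A)"
    using assms
    by (simp flip: invertible_det_nz add: invertible_left_inverse matrix_left_invertible_injective)
  then have "A *v v3 \<noteq> 0"
    using n(3) by (metis matrix_vector_mult_0_right injD norm_zero zero_neq_one)
  then have pos: "a1 > 0" "a2 > 0" "a3 > 0" using le by (auto simp: a1_def a2_def a3_def)
  define V :: mat3 where "V = vector [v1, v2, v3]"
  define U :: mat3 where "U = transpose (vector [A *v v1 /\<^sub>R a1, A *v v2 /\<^sub>R a2, A *v v3 /\<^sub>R a3])"
  have "orthogonal_matrix V" using n o by (simp add: V_def orthogonal_matrix_vector3)
  moreover have "orthogonal_matrix U"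
    using Ao pos by (simp add: U_def orthogonal_matrix_vector3 a1_def a2_def a3_def)
  moreover have "U ** diag3 a1 a2 a3 = A ** transpose V"
    using pos by (simp add: vec_eq_iff forall_3 U_def V_def diag3_def matrix_matrix_mult_def
        matrix_vector_mult_def transpose_def sum_3)
  then have "A = U ** diag3 a1 a2 a3 ** V"
    using \<open>orthogonal_matrix V\<close> by (metis matrix_mul_assoc matrix_mul_rid orthogonal_matrix)
  ultimately show ?thesis
    using le pos by (intro exI[of _ a1] exI[of _ a2] exI[of _ a3] exI[of _ U] exI[of _ V])
      (auto simp: a1_def a2_def a3_def)
qed

lemma norm_orthogonal_matrix_mult:
  fixes Q :: "real^'n^'n"
  assumes "orthogonal_matrix Q"
  shows "norm (Q *v x) = norm x"
proof -
  have "orthogonal_transformation ((*v) Q)"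
    using assms by (simp add: orthogonal_transformation_matrix matrix_vector_mul_linear)
  then show ?thesis by (rule orthogonal_transformation_norm)
qed

lemma norm_vec3_sq: "(norm (y :: real^3))\<^sup>2 = (y$1)\<^sup>2 + (y$2)\<^sup>2 + (y$3)\<^sup>2"
  unfolding power2_norm_eq_inner by (simp add: inner_vec_def sum_3 power2_eq_square)

lemma norm_diag3_mult_sq:
  "(norm (diag3 a1 a2 a3 *v y))\<^sup>2 = a1\<^sup>2 * (y$1)\<^sup>2 + a2\<^sup>2 * (y$2)\<^sup>2 + a3\<^sup>2 * (y$3)\<^sup>2"
  by (simp add: norm_vec3_sq matrix_vector_mult_def diag3_def sum_3 power_mult_distrib)

lemma
  fixes a1 a2 a3 :: real
  assumes "a1 \<ge> a2" "a2 \<ge> a3" "a3 \<ge> 0"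
  shows norm_diag3_mult_le: "norm (diag3 a1 a2 a3 *v y) \<le> a1 * norm y"
    and norm_diag3_mult_ge: "a3 * norm y \<le> norm (diag3 a1 a2 a3 *v y)"
proof -
  have sq: "a3\<^sup>2 \<le> a2\<^sup>2" "a2\<^sup>2 \<le> a1\<^sup>2" using assms by (simp_all add: power_mono)
  have "a2\<^sup>2 * (y$2)\<^sup>2 \<le> a1\<^sup>2 * (y$2)\<^sup>2" "a3\<^sup>2 * (y$3)\<^sup>2 \<le> a1\<^sup>2 * (y$3)\<^sup>2"
    "a3\<^sup>2 * (y$1)\<^sup>2 \<le> a1\<^sup>2 * (y$1)\<^sup>2" "a3\<^sup>2 * (y$2)\<^sup>2 \<le> a2\<^sup>2 * (y$2)\<^sup>2"
    using sq by (auto intro: mult_right_mono)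
  then have "(norm (diag3 a1 a2 a3 *v y))\<^sup>2 \<le> (a1 * norm y)\<^sup>2"
    and "(a3 * norm y)\<^sup>2 \<le> (norm (diag3 a1 a2 a3 *v y))\<^sup>2"
    unfolding norm_diag3_mult_sq power_mult_distrib[of _ "norm y"]
    unfolding norm_vec3_sq by (simp_all add: distrib_left)
  then show "norm (diag3 a1 a2 a3 *v y) \<le> a1 * norm y" "a3 * norm y \<le> norm (diag3 a1 a2 a3 *v y)"
    using assms by (auto intro: power2_le_imp_le)
qed

lemma diag3_mult_axis: "diag3 a1 a2 a3 *v axis 1 1 = a1 *\<^sub>R axis 1 1"
    "diag3 a1 a2 a3 *v axis 3 1 = a3 *\<^sub>R axis 3 1"
  by (simp_all add: vec_eq_iff forall_3 matrix_vector_mult_def sum_3 diag3_def axis_def)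

context
  fixes A :: mat3 and a1 a2 a3 :: real
  assumes det_A: "det A \<noteq> 0" and sv_A: "sing_vals A = (a1, a2, a3)"
begin

lemma sing_vals_svd:
  "a1 \<ge> a2 \<and> a2 \<ge> a3 \<and> a3 \<ge> 0 \<and>
    (\<exists>U V. orthogonal_matrix U \<and> orthogonal_matrix V \<and> A = U ** diag3 a1 a2 a3 ** V)"
proof -
  let ?P = "\<lambda>(a1, a2, a3). a1 \<ge> a2 \<and> a2 \<ge> a3 \<and> a3 \<ge> (0::real) \<and>
      (\<exists>U V. orthogonal_matrix U \<and> orthogonal_matrix V \<and> A = U ** diag3 a1 a2 a3 ** V)"
  have "\<exists>t. ?P t" using svd_exists[OF det_A] by auto
  then have "?P (sing_vals A)" unfolding sing_vals_def by (rule someI_ex)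
  then show ?thesis by (simp add: sv_A)
qed

lemma sing_vals_ordered: "a1 \<ge> a2" "a2 \<ge> a3"
  using sing_vals_svd by auto

lemma
  shows norm_mult_le_sing_val1: "norm (A *v x) \<le> a1 * norm x"
    and sing_val3_le_norm_mult: "a3 * norm x \<le> norm (A *v x)"
    and sing_val1_attained: "\<exists>x. norm x = 1 \<and> norm (A *v x) = a1"
    and sing_val3_attained: "\<exists>x. norm x = 1 \<and> norm (A *v x) = a3"
    and prod_sing_vals: "a1 * a2 * a3 = \<bar>det A\<bar>"
proof -
  obtain U V where U: "orthogonal_matrix U" and V: "orthogonal_matrix V"
    and A: "A = U ** diag3 a1 a2 a3 ** V" and a: "a1 \<ge> a2" "a2 \<ge> a3" "a3 \<ge> 0"
    using sing_vals_svd by blast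
  have norm_A: "norm (A *v x) = norm (diag3 a1 a2 a3 *v (V *v x))" for x
    by (simp add: A norm_orthogonal_matrix_mult[OF U] flip: matrix_vector_mul_assoc)
  show "norm (A *v x) \<le> a1 * norm x" "a3 * norm x \<le> norm (A *v x)"
    unfolding norm_A
    using norm_diag3_mult_le[OF a, of "V *v x"] norm_diag3_mult_ge[OF a, of "V *v x"]
    by (simp_all add: norm_orthogonal_matrix_mult[OF V])
  have "orthogonal_matrix (transpose V)" using V by simp
  then have unit: "norm (transpose V *v axis k 1) = 1" for k
    using norm_orthogonal_matrix_mult[of "transpose V" "axis k 1"] by simp
  have "V *v (transpose V *v y) = y" for y
    using V by (metis matrix_vector_mul_assoc matrix_vector_mul_lid orthogonal_matrix_def)
  then have "norm (A *v (transpose V *v axis k 1)) = norm (diag3 a1 a2 a3 *v axis k 1)" for k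
    by (simp add: norm_A)
  moreover have "norm (diag3 a1 a2 a3 *v axis 1 1) = a1" "norm (diag3 a1 a2 a3 *v axis 3 1) = a3"
    using a by (simp_all add: diag3_mult_axis)
  ultimately show "\<exists>x. norm x = 1 \<and> norm (A *v x) = a1" "\<exists>x. norm x = 1 \<and> norm (A *v x) = a3"
    using unit by metis+
  have "det A = det U * det (diag3 a1 a2 a3) * det V"
    by (simp add: A det_mul)
  also have "det (diag3 a1 a2 a3) = a1 * a2 * a3"
    by (simp add: det_3 diag3_def)
  finally have "det A = det U * (a1 * a2 * a3) * det V" .
  then show "a1 * a2 * a3 = \<bar>det A\<bar>"
    using det_orthogonal_matrix[OF U] det_orthogonal_matrix[OF V] a by (auto simp: abs_mult)
qed

lemma sing_vals_pos: "a3 > 0"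
proof -
  have "a3 \<noteq> 0" using prod_sing_vals det_A by auto
  then show ?thesis using sing_vals_svd by auto
qed

end

section \<open>Perturbation of singular values\<close>

lemma norm_matrix_vector_mult_le_sum_abs:
  fixes A :: "real^'n^'m"
  shows "norm (A *v x) \<le> (\<Sum>i\<in>UNIV. \<Sum>j\<in>UNIV. \<bar>A $ i $ j\<bar>) * norm x"
proof -
  have "norm (A *v x) \<le> onorm ((*v) A) * norm x"
    by (rule onorm) (rule matrix_vector_mul_bounded_linear)
  also have "\<dots> \<le> (\<Sum>i\<in>UNIV. \<Sum>j\<in>UNIV. \<bar>A $ i $ j\<bar>) * norm x"
    by (intro mult_right_mono onorm_le_matrix_component_sum) simp
  finally show ?thesis .
qed

lemma sing_vals_mult_le:
  fixes B M :: mat3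
  assumes det_B: "det B \<noteq> 0" and det_M: "det M \<noteq> 0"
    and M: "\<And>x. norm (M *v x) \<le> c * norm x"
    and sv_B: "sing_vals B = (a1, a2, a3)" and sv_BM: "sing_vals (B ** M) = (b1, b2, b3)"
  shows "b1 \<le> c * a1" and "b3 \<le> c * a3"
proof -
  have det_BM: "det (B ** M) \<noteq> 0" using det_B det_M by (simp add: det_mul)
  have "a1 \<ge> 0" "b3 > 0"
    using sing_vals_ordered[OF det_B sv_B] sing_vals_pos[OF det_B sv_B]
      sing_vals_pos[OF det_BM sv_BM] by auto
  obtain x where x: "norm x = 1" "norm ((B ** M) *v x) = b1"
    using sing_val1_attained[OF det_BM sv_BM] by blast
  have "b1 = norm (B *v (M *v x))" using x by (simp add: matrix_vector_mul_assoc)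
  also have "\<dots> \<le> a1 * norm (M *v x)" by (rule norm_mult_le_sing_val1[OF det_B sv_B])
  also have "\<dots> \<le> a1 * c" using M[of x] x \<open>a1 \<ge> 0\<close> by (simp add: mult_left_mono)
  finally show "b1 \<le> c * a1" by (simp add: mult.commute)
  obtain y where y: "norm y = 1" "norm (B *v y) = a3"
    using sing_val3_attained[OF det_B sv_B] by blast
  have "surj ((*v) M)"
    using det_M
    by (simp flip: invertible_det_nz
        add: invertible_right_inverse matrix_right_invertible_surjective)
  then obtain z where z: "M *v z = y" by (metis surjD)
  have "1 \<le> c * norm z" using M[of z] y z by simp
  then have "c \<ge> 0" by (smt (verit) mult_nonpos_nonneg norm_ge_zero)
  have "b3 * norm z \<le> a3"
    using sing_val3_le_norm_mult[OF det_BM sv_BM, of z] y z by (simp flip: matrix_vector_mul_assoc)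
  have "b3 \<le> b3 * (c * norm z)" using \<open>1 \<le> c * norm z\<close> \<open>b3 > 0\<close> by simp
  also have "\<dots> = c * (b3 * norm z)" by simp
  also have "\<dots> \<le> c * a3" using \<open>b3 * norm z \<le> a3\<close> \<open>c \<ge> 0\<close> by (rule mult_left_mono)
  finally show "b3 \<le> c * a3" .
qed

lemma sing_val_ratios_le:
  fixes a1 a2 a3 b1 b2 b3 c :: real
  assumes pos: "0 < a1" "0 < a2" "0 < a3" "0 < b1" "0 < b2" "0 < b3" and "c \<ge> 1"
    and prod: "a1 * a2 * a3 = b1 * b2 * b3"
    and le: "b1 \<le> c * a1" "b3 \<le> c * a3" "a3 \<le> c * b3"
  shows "a2 / a1 \<le> c ^ 3 * (b2 / b1)" and "a3 / a1 \<le> c ^ 3 * (b3 / b1)"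
    and "a2 * a3 / a1\<^sup>2 \<le> c ^ 3 * (b2 * b3 / b1\<^sup>2)"
proof -
  define D where "D = a1 * a2 * a3"
  have "D > 0" using pos by (simp add: D_def)
  have "c > 0" using \<open>c \<ge> 1\<close> by simp
  have "b1\<^sup>2 * b3 \<le> (c * a1)\<^sup>2 * (c * a3)"
    using le pos by (intro mult_mono power_mono) auto
  then have "b1\<^sup>2 * b3 / c ^ 3 \<le> a1\<^sup>2 * a3"
    using \<open>c > 0\<close>
    by (simp add: divide_le_eq power_mult_distrib power2_eq_square power3_eq_cube algebra_simps)
  have "a2 / a1 = D / (a1\<^sup>2 * a3)"
    using pos by (simp add: D_def field_simps power2_eq_square)
  also have "\<dots> \<le> D / (b1\<^sup>2 * b3 / c ^ 3)"
    using \<open>b1\<^sup>2 * b3 / c ^ 3 \<le> a1\<^sup>2 * a3\<close> \<open>D > 0\<close> \<open>c > 0\<close> pos by (intro divide_left_mono) auto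
  also have "\<dots> = c ^ 3 * (b2 / b1)"
    using pos prod by (simp add: D_def field_simps power2_eq_square)
  finally show "a2 / a1 \<le> c ^ 3 * (b2 / b1)" .
  have "a3 * b1 \<le> (c * b3) * (c * a1)"
    using le pos by (intro mult_mono) auto
  also have "\<dots> \<le> c * (c * b3) * (c * a1)"
    using \<open>c \<ge> 1\<close> pos by (intro mult_right_mono) auto
  finally show "a3 / a1 \<le> c ^ 3 * (b3 / b1)"
    using pos by (simp add: field_simps power3_eq_cube)
  have "b1 ^ 3 \<le> (c * a1) ^ 3"
    using le pos by (intro power_mono) auto
  then have "b1 ^ 3 / c ^ 3 \<le> a1 ^ 3"
    using \<open>c > 0\<close> by (simp add: divide_le_eq power_mult_distrib mult.commute)
  have "a2 * a3 / a1\<^sup>2 = D / a1 ^ 3"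
    using pos by (simp add: D_def field_simps power2_eq_square power3_eq_cube)
  also have "\<dots> \<le> D / (b1 ^ 3 / c ^ 3)"
    using \<open>b1 ^ 3 / c ^ 3 \<le> a1 ^ 3\<close> \<open>D > 0\<close> \<open>c > 0\<close> pos by (intro divide_left_mono) auto
  also have "\<dots> = c ^ 3 * (b2 * b3 / b1\<^sup>2)"
    using pos prod by (simp add: D_def field_simps power2_eq_square power3_eq_cube)
  finally show "a2 * a3 / a1\<^sup>2 \<le> c ^ 3 * (b2 * b3 / b1\<^sup>2)" .
qed

lemma phi_le_if_sing_val_ratios_le:
  assumes sv_A: "sing_vals A = (a1, a2, a3)" and sv_B: "sing_vals B = (b1, b2, b3)"
    and "K > 0" "s \<ge> 0" and pos: "0 < a1" "0 \<le> a2" "0 \<le> a3" "0 < b1" "0 \<le> b2" "0 \<le> b3"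
    and x: "a2 / a1 \<le> K * (b2 / b1)" and y: "a3 / a1 \<le> K * (b3 / b1)"
    and z: "a2 * a3 / a1\<^sup>2 \<le> K * (b2 * b3 / b1\<^sup>2)"
  shows "phi s A \<le> K powr s * phi s B"
proof -
  have powr_le: "u powr t \<le> K powr t * v powr t" if "0 \<le> u" "u \<le> K * v" "0 \<le> v" "t \<ge> 0"
    for u v t :: real
  proof -
    have "u powr t \<le> (K * v) powr t" using that by (simp add: powr_mono2)
    also have "\<dots> = K powr t * v powr t" using \<open>K > 0\<close> that by (simp add: powr_mult)
    finally show ?thesis .
  qed
  consider "s \<le> 1" | "1 < s" "s \<le> 2" | "2 < s" by linarith
  then show ?thesis
  proof cases
    case 1
    then show ?thesis using powr_le[OF _ x] pos \<open>s \<ge> 0\<close> by (simp add: phi_def sv_A sv_B)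
  next
    case 2
    have "a2 / a1 * (a3 / a1) powr (s - 1)
        \<le> (K * (b2 / b1)) * (K powr (s - 1) * (b3 / b1) powr (s - 1))"
      using x powr_le[OF _ y] pos 2 \<open>K > 0\<close> by (intro mult_mono) auto
    also have "\<dots> = K powr s * (b2 / b1 * (b3 / b1) powr (s - 1))"
      using \<open>K > 0\<close> by (simp add: powr_diff)
    finally show ?thesis using 2 by (simp add: phi_def sv_A sv_B)
  next
    case 3
    then show ?thesis using powr_le[OF _ z] pos by (simp add: phi_def sv_A sv_B)
  qed
qed

lemma one_le_if_inverse_norms_le:
  fixes M N :: "real^'n^'n"
  assumes MN: "M ** N = mat 1"
    and M: "\<And>x. norm (M *v x) \<le> c * norm x" and N: "\<And>x. norm (N *v x) \<le> c * norm x"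
  shows "1 \<le> c"
proof -
  obtain e :: "real^'n" where "norm e = 1" using vector_choose_size[of 1] by auto
  have "norm (N *v e) \<le> c" using N[of e] \<open>norm e = 1\<close> by simp
  then have "0 \<le> c" using norm_ge_zero[of "N *v e"] by linarith
  have "1 \<le> c * norm (N *v e)"
    using M[of "N *v e"] MN \<open>norm e = 1\<close> by (simp add: matrix_vector_mul_assoc)
  also have "\<dots> \<le> c * c" using \<open>norm (N *v e) \<le> c\<close> \<open>0 \<le> c\<close> by (rule mult_left_mono)
  finally show ?thesis using \<open>0 \<le> c\<close> power2_le_imp_le[of 1 c] by (simp add: power2_eq_square)
qed

lemma phi_le_phi_mult:
  fixes B M N :: mat3
  assumes det_B: "det B \<noteq> 0" and det_M: "\<bar>det M\<bar> = 1" and MN: "M ** N = mat 1"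
    and M: "\<And>x. norm (M *v x) \<le> c * norm x" and N: "\<And>x. norm (N *v x) \<le> c * norm x"
    and "s \<ge> 0"
  shows "phi s B \<le> (c ^ 3) powr s * phi s (B ** M)"
proof -
  have "1 \<le> c" using MN M N by (rule one_le_if_inverse_norms_le)
  obtain a1 a2 a3 where sv_B: "sing_vals B = (a1, a2, a3)" by (cases "sing_vals B") auto
  obtain b1 b2 b3 where sv_BM: "sing_vals (B ** M) = (b1, b2, b3)"
    by (cases "sing_vals (B ** M)") auto
  have "det M * det N = 1" using MN by (metis det_I det_mul)
  then have "det M \<noteq> 0" "det N \<noteq> 0" by auto
  then have det_BM: "det (B ** M) \<noteq> 0" using det_B by (simp add: det_mul)
  have "B ** M ** N = B" by (metis MN matrix_mul_assoc matrix_mul_rid)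
  then have sv_BMN: "sing_vals (B ** M ** N) = (a1, a2, a3)" using sv_B by simp
  have le: "b1 \<le> c * a1" "b3 \<le> c * a3"
    by (rule sing_vals_mult_le[OF det_B \<open>det M \<noteq> 0\<close> M sv_B sv_BM])+
  have "a3 \<le> c * b3"
    by (rule sing_vals_mult_le(2)[OF det_BM \<open>det N \<noteq> 0\<close> N sv_BM sv_BMN])
  have prod: "a1 * a2 * a3 = b1 * b2 * b3"
    using prod_sing_vals[OF det_B sv_B] prod_sing_vals[OF det_BM sv_BM] det_M
    by (simp add: det_mul abs_mult)
  have "0 < a3" "a3 \<le> a2" "a2 \<le> a1" "0 < b3" "b3 \<le> b2" "b2 \<le> b1"
    using sing_vals_pos[OF det_B sv_B] sing_vals_ordered[OF det_B sv_B]
      sing_vals_pos[OF det_BM sv_BM] sing_vals_ordered[OF det_BM sv_BM] by auto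
  then have pos: "0 < a1" "0 < a2" "0 < a3" "0 < b1" "0 < b2" "0 < b3" by linarith+
  note ratios = sing_val_ratios_le[OF pos \<open>1 \<le> c\<close> prod le \<open>a3 \<le> c * b3\<close>]
  show ?thesis
    using \<open>1 \<le> c\<close> pos
    by (intro phi_le_if_sing_val_ratios_le[OF sv_B sv_BM _ \<open>s \<ge> 0\<close> _ _ _ _ _ _ ratios]) auto
qed

section \<open>Words over the generators\<close>

lemma mpow_0: "mpow A 0 = mat 1"
  by (simp add: mpow_def)

lemma mpow_Suc: "mpow A (Suc n) = A ** mpow A n"
  by (simp add: mpow_def)

lemma word_prod_Nil [simp]: "word_prod [] = mat 1"
  by (simp add: word_prod_def)

lemma word_prod_Cons [simp]: "word_prod (A # ws) = A ** word_prod ws"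
  by (simp add: word_prod_def)

lemma word_prod_append: "word_prod (us @ ws) = word_prod us ** word_prod ws"
  by (induction us) (simp_all add: matrix_mul_assoc)

lemma word_prod_replicate: "word_prod (replicate n A) = mpow A n"
  by (induction n) (simp_all add: mpow_0 mpow_Suc)

lemma word_prod_concat: "word_prod (concat wss) = word_prod (map word_prod wss)"
  by (induction wss) (simp_all add: word_prod_append)

lemma mat1_eq_vector3:
  "(mat 1 :: mat3) = vector [vector [1, 0, 0], vector [0, 1, 0], vector [0, 0, 1]]"
  by (simp add: vec_eq_iff forall_3 mat_def)

lemma mpow_A1: "mpow A1 n = vector [vector [1, real n, real n], vector [0, 1, 0], vector [0, 0, 1]]"
  by (induction n) (simp_all add: mpow_0 mpow_Suc mat1_eq_vector3 A1_def vec_eq_iff forall_3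
      matrix_matrix_mult_def sum_3 algebra_simps)

lemma mpow_A2: "mpow A2 n = vector [vector [1, 0, 0], vector [real n, 1, real n], vector [0, 0, 1]]"
  by (induction n) (simp_all add: mpow_0 mpow_Suc mat1_eq_vector3 A2_def vec_eq_iff forall_3
      matrix_matrix_mult_def sum_3 algebra_simps)

lemma mpow_A3: "mpow A3 n = vector [vector [1, 0, 0], vector [0, 1, 0], vector [real n, real n, 1]]"
  by (induction n) (simp_all add: mpow_0 mpow_Suc mat1_eq_vector3 A3_def vec_eq_iff forall_3
      matrix_matrix_mult_def sum_3 algebra_simps)

lemma A_R_distinct: "A1 \<noteq> A2" "A1 \<noteq> A3" "A2 \<noteq> A3"
  by (simp_all add: A1_def A2_def A3_def vec_eq_iff forall_3)

lemma A_R_eq_Amat_image: "A_R = Amat ` {1, 2, 3}"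
  by (auto simp: A_R_def Amat_def)

lemma Amat_neq: "i \<in> {1, 2, 3} \<Longrightarrow> j \<in> {1, 2, 3} \<Longrightarrow> i \<noteq> j \<Longrightarrow> Amat i \<noteq> Amat j"
  using A_R_distinct by (auto simp: Amat_def)

lemma word_prod_block: "word_prod (replicate n a @ [b]) = mpow a n ** b"
  by (simp add: word_prod_append word_prod_replicate)

lemma Gamma_eq_word_prod_blocks: "Gamma = word_prod ` blocks A_R"
proof (intro equalityI subsetI)
  fix M assume "M \<in> Gamma"
  then obtain i j n where ij: "i \<in> {1, 2, 3}" "j \<in> {1, 2, 3}" "i \<noteq> j" "n \<ge> 1"
    and M: "M = mpow (Amat i) n ** Amat j"
    unfolding Gamma_def by blast
  have "replicate n (Amat i) @ [Amat j] \<in> blocks A_R"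
    unfolding blocks_def A_R_eq_Amat_image using ij Amat_neq[OF ij(1-3)] by auto
  moreover have "M = word_prod (replicate n (Amat i) @ [Amat j])" by (simp add: M word_prod_block)
  ultimately show "M \<in> word_prod ` blocks A_R" by (rule rev_image_eqI)
next
  fix M assume "M \<in> word_prod ` blocks A_R"
  then obtain a b n where ab: "a \<in> A_R" "b \<in> A_R" "a \<noteq> b" "0 < n" and M: "M = mpow a n ** b"
    unfolding blocks_def by (auto simp: word_prod_block)
  then obtain i j where "i \<in> {1, 2, 3}" "j \<in> {1, 2, 3}" "a = Amat i" "b = Amat j"
    unfolding A_R_eq_Amat_image by blast
  then show "M \<in> Gamma"
    unfolding Gamma_def using ab M by (intro CollectI exI[of _ i] exI[of _ j] exI[of _ n]) auto
qed

lemma block_prods: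
  "mpow A1 n ** A2 =
    vector [vector [1 + real n, real n, 2 * real n], vector [1, 1, 1], vector [0, 0, 1]]"
  "mpow A1 n ** A3 =
    vector [vector [1 + real n, 2 * real n, real n], vector [0, 1, 0], vector [1, 1, 1]]"
  "mpow A2 n ** A1 =
    vector [vector [1, 1, 1], vector [real n, 1 + real n, 2 * real n], vector [0, 0, 1]]"
  "mpow A2 n ** A3 =
    vector [vector [1, 0, 0], vector [2 * real n, 1 + real n, real n], vector [1, 1, 1]]"
  "mpow A3 n ** A1 =
    vector [vector [1, 1, 1], vector [0, 1, 0], vector [real n, 2 * real n, 1 + real n]]"
  "mpow A3 n ** A2 =
    vector [vector [1, 0, 0], vector [1, 1, 1], vector [2 * real n, real n, 1 + real n]]"
  unfolding mpow_A1 mpow_A2 mpow_A3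
  by (simp_all add: A1_def A2_def A3_def vec_eq_iff forall_3 matrix_matrix_mult_def sum_3)

(* The diagonal of a^n b is 1 + n in the row of a and 1 elsewhere; one further entry in the
   column of a tells the two possible b apart. *)
lemma inj_on_word_prod_blocks: "inj_on word_prod (blocks A_R)"
proof (rule inj_onI)
  fix u v assume "u \<in> blocks A_R" "v \<in> blocks A_R" "word_prod u = word_prod v"
  then obtain a b n a' b' n' where u: "u = replicate n a @ [b]" and v: "v = replicate n' a' @ [b']"
    and letters: "a \<in> A_R" "b \<in> A_R" "a \<noteq> b" "a' \<in> A_R" "b' \<in> A_R" "a' \<noteq> b'"
    and "0 < n" "0 < n'" and eq: "mpow a n ** b = mpow a' n' ** b'"
    unfolding blocks_def by (auto simp: word_prod_block)
  let ?pairs = "{(A1, A2), (A1, A3), (A2, A1), (A2, A3), (A3, A1), (A3, A2)}"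
  have "(a, b) \<in> ?pairs" "(a', b') \<in> ?pairs" using letters by (auto simp: A_R_def)
  moreover
  define entries :: "mat3 \<Rightarrow> real list"
    where "entries M = [M$1$1, M$2$2, M$3$3, M$2$1, M$1$2, M$1$3]" for M
  have "entries (mpow a n ** b) = entries (mpow a' n' ** b')" using eq by simp
  ultimately have "a = a' \<and> b = b' \<and> n = n'"
    using \<open>0 < n\<close> \<open>0 < n'\<close>
    by (auto simp: block_prods entries_def A_R_distinct A_R_distinct[THEN not_sym])
  then show "u = v" using u v by simp
qed

lemma det_A_R: "a \<in> A_R \<Longrightarrow> det a = 1"
  by (auto simp: A_R_def A1_def A2_def A3_def det_3)

lemma det_word_prod: "set ws \<subseteq> A_R \<Longrightarrow> det (word_prod ws) = 1"
  by (induction ws) (simp_all add: det_mul det_A_R)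

(* Each a in A_R is unipotent with (a - 1)^2 = 0, whence a^-1 = 2 - a. *)
lemma A_R_mult_inverse: "a \<in> A_R \<Longrightarrow> a ** (mat 2 - a) = mat 1"
  by (auto simp: A_R_def A1_def A2_def A3_def vec_eq_iff forall_3 matrix_matrix_mult_def sum_3
      mat_def)

lemma
  assumes "a \<in> A_R"
  shows norm_A_R_mult_le: "norm (a *v x) \<le> 5 * norm x"
    and norm_A_R_inverse_mult_le: "norm ((mat 2 - a) *v x) \<le> 5 * norm x"
proof -
  have "(\<Sum>i\<in>UNIV. \<Sum>j\<in>UNIV. \<bar>a $ i $ j\<bar>) = 5"
    "(\<Sum>i\<in>UNIV. \<Sum>j\<in>UNIV. \<bar>(mat 2 - a) $ i $ j\<bar>) = 5"
    using assms by (auto simp: A_R_def A1_def A2_def A3_def sum_3 mat_def)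
  then show "norm (a *v x) \<le> 5 * norm x" "norm ((mat 2 - a) *v x) \<le> 5 * norm x"
    using norm_matrix_vector_mult_le_sum_abs by metis+
qed

lemma phi_word_prod_le_append:
  assumes "set w \<subseteq> A_R" "b \<in> A_R" "s \<ge> 0"
  shows "phi s (word_prod w) \<le> 125 powr s * phi s (word_prod (w @ [b]))"
proof -
  have "phi s (word_prod w) \<le> (5 ^ 3) powr s * phi s (word_prod w ** b)"
    using assms
    by (intro phi_le_phi_mult[OF _ _ A_R_mult_inverse norm_A_R_mult_le norm_A_R_inverse_mult_le])
      (simp_all add: det_word_prod det_A_R)
  then show ?thesis by (simp add: word_prod_append)
qed

section \<open>Zeta functions\<close>

definition word_weight :: "real \<Rightarrow> mat3 list \<Rightarrow> ennreal" where
  "word_weight s ws = ennreal (phi s (word_prod ws))"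

lemma zeta_eq_infsum: "zeta S s = infsum (word_weight s) (lists S - {[]})"
proof -
  define B where "B n = {ws. length ws = Suc n \<and> set ws \<subseteq> S}" for n
  have "disjoint_family B" by (auto simp: disjoint_family_on_def B_def)
  have "zeta S s = (\<Sum>n. infsum (word_weight s) (B n))"
    by (simp add: zeta_def B_def word_weight_def[abs_def])
  also have "\<dots> = infsum (word_weight s) (\<Union>n. B n)"
    using infsum_UN_nat_ennreal[OF \<open>disjoint_family B\<close>] by simp
  also have "(\<Union>n. B n) = lists S - {[]}"
    by (auto simp: B_def) (metis Suc_pred length_greater_0_conv)
  finally show ?thesis .
qed

lemma zeta_Gamma_eq_infsum_block_words:
  "zeta Gamma s = infsum (word_weight s) (block_words A_R)"
proof -
  let ?BL = "lists (blocks A_R) - {[]}"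
  have "inj_on (map word_prod) ?BL"
    using inj_on_map_lists[OF inj_on_word_prod_blocks] by (rule inj_on_subset) auto
  moreover have "lists Gamma - {[]} = map word_prod ` ?BL"
    by (auto simp: Gamma_eq_word_prod_blocks lists_image)
  ultimately have "zeta Gamma s = infsum (word_weight s \<circ> map word_prod) ?BL"
    by (simp add: zeta_eq_infsum infsum_reindex)
  also have "\<dots> = infsum (word_weight s \<circ> concat) ?BL"
    by (simp add: comp_def word_weight_def word_prod_concat)
  also have "\<dots> = infsum (word_weight s) (block_words A_R)"
    unfolding block_words_def
    by (rule infsum_reindex[symmetric]) (rule inj_on_subset[OF inj_on_concat_blocks], auto)
  finally show ?thesis .
qed

lemma zeta_Gamma_le_zeta_A_R: "zeta Gamma s \<le> zeta A_R s"
  unfolding zeta_Gamma_eq_infsum_block_words zeta_eq_infsum[of A_R]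
  by (rule infsum_mono_set_ennreal[OF block_words_subset])

lemma zeta_A_R_le_zeta_Gamma:
  assumes "s \<ge> 0"
  shows "zeta A_R s \<le> (1 + ennreal (125 powr s)) * zeta Gamma s"
proof -
  let ?W = "lists A_R - {[]}" and ?BW = "block_words A_R"
  define partner where "partner a = (if a = A1 then A2 else A1)" for a
  define extend where "extend w = w @ [partner (last w)]" for w
  have partner: "partner a \<in> A_R" "partner a \<noteq> a" for a
    using A_R_distinct by (auto simp: partner_def A_R_def)
  have extend: "extend w \<in> ?BW" if "w \<in> ?W - ?BW" for w
    using that partner unfolding extend_def by (intro append_letter_in_block_words) auto
  have "inj_on extend (?W - ?BW)" by (auto simp: inj_on_def extend_def)
  have weight: "word_weight s w \<le> ennreal (125 powr s) * word_weight s (extend w)" if "w \<in> ?W" for w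
  proof -
    have "phi s (word_prod w) \<le> 125 powr s * phi s (word_prod (extend w))"
      using that partner assms unfolding extend_def by (intro phi_word_prod_le_append) auto
    then show ?thesis by (simp add: word_weight_def ennreal_leI flip: ennreal_mult')
  qed
  have "?W = ?BW \<union> (?W - ?BW)" using block_words_subset by blast
  then have "zeta A_R s = infsum (word_weight s) ?BW + infsum (word_weight s) (?W - ?BW)"
    unfolding zeta_eq_infsum
    by (metis Diff_disjoint infsum_Un_disjoint nonneg_summable_on_complete zero_le)
  also have "infsum (word_weight s) ?BW = zeta Gamma s"
    by (simp add: zeta_Gamma_eq_infsum_block_words)
  also have "infsum (word_weight s) (?W - ?BW)
      \<le> infsum (\<lambda>w. ennreal (125 powr s) * word_weight s (extend w)) (?W - ?BW)"
    using weight by (intro infsum_mono) (auto intro: nonneg_summable_on_complete)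
  also have "\<dots> = ennreal (125 powr s) * infsum (word_weight s) (extend ` (?W - ?BW))"
    by (simp add: infsum_cmult_right_ennreal infsum_reindex[OF \<open>inj_on extend (?W - ?BW)\<close>] comp_def)
  also have "\<dots> \<le> ennreal (125 powr s) * zeta Gamma s"
    unfolding zeta_Gamma_eq_infsum_block_words
    using extend by (intro mult_left_mono infsum_mono_set_ennreal) auto
  finally show ?thesis by (simp add: distrib_right add_left_mono)
qed

lemma zeta_A_R_finite_iff_zeta_Gamma_finite:
  assumes "s \<ge> 0"
  shows "zeta A_R s < \<infinity> \<longleftrightarrow> zeta Gamma s < \<infinity>"
proof
  show "zeta A_R s < \<infinity> \<Longrightarrow> zeta Gamma s < \<infinity>"
    using zeta_Gamma_le_zeta_A_R by (rule le_less_trans)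
  assume "zeta Gamma s < \<infinity>"
  then have "(1 + ennreal (125 powr s)) * zeta Gamma s < \<infinity>"
    by (simp add: ennreal_mult_less_top)
  with zeta_A_R_le_zeta_Gamma[OF assms] show "zeta A_R s < \<infinity>"
    by (rule le_less_trans)
qed

theorem lemma6p7:
  shows "crit_exp A_R = crit_exp Gamma"
proof -
  have "{ereal s | s. s \<ge> 0 \<and> zeta A_R s < \<infinity>} = {ereal s | s. s \<ge> 0 \<and> zeta Gamma s < \<infinity>}"
    using zeta_A_R_finite_iff_zeta_Gamma_finite by blast
  then show ?thesis unfolding crit_exp_def by simp
qed

end
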